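(* Let $V=\{0,\alpha,\beta\}$ be the three-element ordered set with least element $0$ and two incomparable maximal elements $\alpha,\beta$. There is no algebra $A$ such that the ordered set $(\mathrm{Princ}(A),\subseteq)$ is isomorphic to $V$.
   Context: For an algebra $A$, $\mathrm{Princ}(A)$ denotes the set of principal congruences $\mathrm{con}(a,b)$ ($a,b\in A$) of $A$, ordered by inclusion, where $\mathrm{con}(a,b)$ is the least congruence of $A$ containing $(a,b)$. *)

theory Defs
  imports Main
begin

text \<open>Universal algebras: a carrier set A together with a set F of finitary
operations, each given as a pair (n, f) of its arity n and a function
f on argument lists (only lists of length n over A matter).\<close>

definition algebra :: "'a set \<Rightarrow> (nat \<times> ('a list \<Rightarrow> 'a)) set \<Rightarrow> bool" where
  "algebra A F \<longleftrightarrow>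
     (\<forall>(n, f) \<in> F. \<forall>xs. set xs \<subseteq> A \<and> length xs = n \<longrightarrow> f xs \<in> A)"

definition congruence :: "'a set \<Rightarrow> (nat \<times> ('a list \<Rightarrow> 'a)) set \<Rightarrow> ('a \<times> 'a) set \<Rightarrow> bool" where
  "congruence A F \<theta> \<longleftrightarrow> equiv A \<theta> \<and>
     (\<forall>(n, f) \<in> F. \<forall>xs ys. set xs \<subseteq> A \<and> set ys \<subseteq> A \<and> length xs = n \<and> length ys = n
        \<and> list_all2 (\<lambda>x y. (x, y) \<in> \<theta>) xs ys \<longrightarrow> (f xs, f ys) \<in> \<theta>)"

definition con :: "'a set \<Rightarrow> (nat \<times> ('a list \<Rightarrow> 'a)) set \<Rightarrow> 'a \<Rightarrow> 'a \<Rightarrow> ('a \<times> 'a) set" where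
  "con A F a b = \<Inter> {\<theta>. congruence A F \<theta> \<and> (a, b) \<in> \<theta>}"

definition Princ :: "'a set \<Rightarrow> (nat \<times> ('a list \<Rightarrow> 'a)) set \<Rightarrow> ('a \<times> 'a) set set" where
  "Princ A F = {con A F a b | a b. a \<in> A \<and> b \<in> A}"

datatype V = V0 | Valpha | Vbeta

definition leV :: "V \<Rightarrow> V \<Rightarrow> bool" where
  "leV x y \<longleftrightarrow> x = y \<or> x = V0"

end

theory Submission
  imports Defs
begin

text \<open>The congruences of A corresponding to \<alpha> and \<beta> are incomparable, yet every principal
  congruence lies below one of them, so their union contains every pair of elements. But an
  equivalence relation cannot be the union of two equivalence relations neither of which is
  the full relation (just as a group is never the union of two proper subgroups), and a full
  congruence would lie above the other one.\<close>

lemma congruence_full: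
  assumes "algebra A F"
  shows "congruence A F (A \<times> A)"
  using assms unfolding congruence_def algebra_def equiv_def refl_on_def sym_def trans_def
  by fastforce

lemma congruence_Inter:
  assumes "S \<noteq> {}" and cong: "\<And>\<theta>. \<theta> \<in> S \<Longrightarrow> congruence A F \<theta>"
  shows "congruence A F (\<Inter>S)"
proof -
  have eq: "\<And>\<theta>. \<theta> \<in> S \<Longrightarrow> equiv A \<theta>"
    using cong by (simp add: congruence_def)
  have "equiv A (\<Inter>S)"
  proof (rule equivI)
    show "\<Inter>S \<subseteq> A \<times> A"
      using assms(1) eq unfolding equiv_def by blast
    show "refl_on A (\<Inter>S)"
      using eq unfolding equiv_def refl_on_def by blast
    show "sym (\<Inter>S)"
      using eq unfolding equiv_def sym_def by blast
    show "trans (\<Inter>S)"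
      using eq unfolding equiv_def trans_def by blast
  qed
  moreover have "(f xs, f ys) \<in> \<Inter>S"
    if "(n, f) \<in> F" "set xs \<subseteq> A" "set ys \<subseteq> A" "length xs = n" "length ys = n"
      and rel: "list_all2 (\<lambda>x y. (x, y) \<in> \<Inter>S) xs ys" for n f xs ys
  proof
    fix \<theta> assume "\<theta> \<in> S"
    with rel have "list_all2 (\<lambda>x y. (x, y) \<in> \<theta>) xs ys"
      by (auto elim: list_all2_mono)
    with that cong[OF \<open>\<theta> \<in> S\<close>] show "(f xs, f ys) \<in> \<theta>"
      unfolding congruence_def by blast
  qed
  ultimately show ?thesis
    unfolding congruence_def by blast
qed

lemma congruence_con:
  assumes "algebra A F" "a \<in> A" "b \<in> A"
  shows "congruence A F (con A F a b)"
  unfolding con_def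
proof (rule congruence_Inter)
  show "{\<theta>. congruence A F \<theta> \<and> (a, b) \<in> \<theta>} \<noteq> {}"
    using congruence_full[OF assms(1)] assms(2,3) by blast
qed simp

lemma con_mem: "(a, b) \<in> con A F a b"
  by (auto simp: con_def)

lemma congruence_Princ:
  assumes "algebra A F" "\<theta> \<in> Princ A F"
  shows "congruence A F \<theta>"
  using assms congruence_con by (auto simp: Princ_def)

lemma equiv_Un_full:
  assumes P: "equiv A P" and Q: "equiv A Q" and U: "A \<times> A \<subseteq> P \<union> Q"
  shows "P = A \<times> A \<or> Q = A \<times> A"
proof (rule disjCI)
  assume "Q \<noteq> A \<times> A"
  with Q obtain x y where xy: "x \<in> A" "y \<in> A" "(x, y) \<notin> Q"
    by (auto simp: equiv_def refl_on_def)
  with U have "(x, y) \<in> P" by blast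
  \<comment> \<open>z cannot be Q-related to both x and y, so it is P-related to one of them, hence to x.\<close>
  have xP: "(x, z) \<in> P" if "z \<in> A" for z
  proof -
    have "(x, z) \<notin> Q \<or> (y, z) \<notin> Q"
      using xy(3) Q unfolding equiv_def sym_def trans_def by blast
    then have "(x, z) \<in> P \<or> (y, z) \<in> P"
      using U xy that by blast
    with \<open>(x, y) \<in> P\<close> P show ?thesis
      unfolding equiv_def trans_def by blast
  qed
  show "P = A \<times> A"
  proof
    show "P \<subseteq> A \<times> A"
      using P by (simp add: equiv_def refl_on_def)
    show "A \<times> A \<subseteq> P"
      using xP P unfolding equiv_def sym_def trans_def by blast
  qed
qed

theorem corollary1p2:
  fixes A :: "'a set" and F :: "(nat \<times> ('a list \<Rightarrow> 'a)) set"
  assumes "algebra A F"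
  shows "\<not> (\<exists>h. bij_betw h (Princ A F) (UNIV :: V set) \<and>
              (\<forall>x \<in> Princ A F. \<forall>y \<in> Princ A F. x \<subseteq> y \<longleftrightarrow> leV (h x) (h y)))"
proof
  assume "\<exists>h. bij_betw h (Princ A F) (UNIV :: V set) \<and>
              (\<forall>x \<in> Princ A F. \<forall>y \<in> Princ A F. x \<subseteq> y \<longleftrightarrow> leV (h x) (h y))"
  then obtain h where bij: "bij_betw h (Princ A F) UNIV"
    and ord: "\<forall>x \<in> Princ A F. \<forall>y \<in> Princ A F. x \<subseteq> y \<longleftrightarrow> leV (h x) (h y)" by blast
  have "Valpha \<in> h ` Princ A F" "Vbeta \<in> h ` Princ A F"
    using bij by (auto simp: bij_betw_def)
  then obtain P Q where PQ: "P \<in> Princ A F" "h P = Valpha" "Q \<in> Princ A F" "h Q = Vbeta"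
    by (metis imageE)
  have equiv_PQ: "equiv A P" "equiv A Q"
    using PQ congruence_Princ[OF assms] by (auto simp: congruence_def)
  have incomparable: "\<not> P \<subseteq> Q" "\<not> Q \<subseteq> P"
    using ord PQ by (auto simp: leV_def)
  have "(x, y) \<in> P \<union> Q" if "x \<in> A" "y \<in> A" for x y
  proof -
    from that have R: "con A F x y \<in> Princ A F" by (auto simp: Princ_def)
    have "leV (h (con A F x y)) Valpha \<or> leV (h (con A F x y)) Vbeta"
      by (cases "h (con A F x y)") (auto simp: leV_def)
    then have "con A F x y \<subseteq> P \<or> con A F x y \<subseteq> Q"
      using ord R PQ by metis
    with con_mem[of x y A F] show ?thesis by blast
  qed
  then have "P = A \<times> A \<or> Q = A \<times> A"
    using equiv_Un_full[OF equiv_PQ] by auto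
  moreover have "P \<subseteq> A \<times> A" "Q \<subseteq> A \<times> A"
    using equiv_PQ by (auto simp: equiv_def refl_on_def)
  ultimately show False
    using incomparable by blast
qed

end
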